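(* Let $\gamma=\begin{pmatrix}A&B\\C&D\end{pmatrix}\in\mathbf{Sp}(2n,\mathbb R)$ with $\gamma\tau(\gamma)=I$ and $C=0$. Then there exists $h\in\mathbf{Sp}(2n,\mathbb R)$ with $\gamma=\tau(h)h^{-1}$ (i.e. the 1-cocycle $f_\gamma$ is cohomologically trivial).
   Context: $\mathbf{Sp}(2n,\mathbb R)$: real $2n\times2n$ matrices $g=\begin{pmatrix}A&B\\C&D\end{pmatrix}$ ($n\times n$ blocks) with ${}^tgJg=J$, $J=\begin{pmatrix}0&I\\-I&0\end{pmatrix}$. $\tau\begin{pmatrix}A&B\\C&D\end{pmatrix}=\begin{pmatrix}A&-B\\-C&D\end{pmatrix}$. $f_\gamma$ denotes the cocycle $\mathrm{Gal}(\mathbb C/\mathbb R)=\{1,\tau\}\to\mathbf{Sp}(2n,\mathbb R)$, $\tau\mapsto\gamma$. *)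

theory Defs
  imports "HOL-Analysis.Analysis"
begin

text \<open>Real 2n x 2n matrices are modelled as real^('n+'n)^('n+'n): the index type
  'n + 'n splits indices into the first block (Inl) and the second block (Inr),
  so that g = [[A,B],[C,D]] with A = entries (Inl,Inl), B = (Inl,Inr),
  C = (Inr,Inl), D = (Inr,Inr).  n = CARD('n).\<close>

type_synonym 'n mat2n = "real^('n + 'n)^('n + 'n)"

definition blkA :: "'n::finite mat2n \<Rightarrow> real^'n^'n" where
  "blkA g = (\<chi> i j. g $ Inl i $ Inl j)"
definition blkB :: "'n::finite mat2n \<Rightarrow> real^'n^'n" where
  "blkB g = (\<chi> i j. g $ Inl i $ Inr j)"
definition blkC :: "'n::finite mat2n \<Rightarrow> real^'n^'n" where
  "blkC g = (\<chi> i j. g $ Inr i $ Inl j)"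
definition blkD :: "'n::finite mat2n \<Rightarrow> real^'n^'n" where
  "blkD g = (\<chi> i j. g $ Inr i $ Inr j)"

definition Jmat :: "'n::finite mat2n" where
  "Jmat = (\<chi> i j. case (i, j) of
      (Inl a, Inr b) \<Rightarrow> (if a = b then 1 else 0)
    | (Inr a, Inl b) \<Rightarrow> (if a = b then -1 else 0)
    | _ \<Rightarrow> 0)"

definition Sp :: "'n::finite mat2n set" where
  "Sp = {g. transpose g ** Jmat ** g = Jmat}"

definition tau :: "'n::finite mat2n \<Rightarrow> 'n mat2n" where
  "tau g = (\<chi> i j. case (i, j) of
      (Inl a, Inl b) \<Rightarrow> g $ i $ j
    | (Inr a, Inr b) \<Rightarrow> g $ i $ j
    | _ \<Rightarrow> - (g $ i $ j))"

end

theory Submission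
  imports Defs
begin

text \<open>Write \<gamma> = [[A, B], [0, D]]. Being symplectic and a cocycle forces A^2 = I, D = A^T,
  A B = B A^T and A B symmetric. Conjugating by the symplectic shear u = [[I, X], [0, I]] with
  X = -A B / 2 gives \<tau>(u) diag(A, A^T) = \<gamma> u, so it suffices to split the diagonal cocycle.
  With the eigenprojections E = (I + A)/2 and F = (I - A)/2 of the involution A, the matrix
  h = [[E, -F N], [F^T, E^T N]] has its block columns in the right eigenspaces, so
  \<tau>(h) = diag(A, A^T) h, and it is symplectic once N inverts E^T + F = I + (A^T - A)/2,
  which is invertible as the identity plus a skew matrix.\<close>

definition block_mat ::
    "real^'n^'n \<Rightarrow> real^'n^'n \<Rightarrow> real^'n^'n \<Rightarrow> real^'n^'n \<Rightarrow> 'n::finite mat2n" where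
  "block_mat P Q R S = (\<chi> i j. case (i, j) of
      (Inl a, Inl b) \<Rightarrow> P $ a $ b
    | (Inl a, Inr b) \<Rightarrow> Q $ a $ b
    | (Inr a, Inl b) \<Rightarrow> R $ a $ b
    | (Inr a, Inr b) \<Rightarrow> S $ a $ b)"

lemma block_mat_nth [simp]:
  "block_mat P Q R S $ Inl a $ Inl b = P $ a $ b"
  "block_mat P Q R S $ Inl a $ Inr b = Q $ a $ b"
  "block_mat P Q R S $ Inr a $ Inl b = R $ a $ b"
  "block_mat P Q R S $ Inr a $ Inr b = S $ a $ b"
  by (simp_all add: block_mat_def)

lemma mat2n_eqI:
  fixes g h :: "'n::finite mat2n"
  assumes "\<And>a b. g $ Inl a $ Inl b = h $ Inl a $ Inl b"
    and "\<And>a b. g $ Inl a $ Inr b = h $ Inl a $ Inr b"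
    and "\<And>a b. g $ Inr a $ Inl b = h $ Inr a $ Inl b"
    and "\<And>a b. g $ Inr a $ Inr b = h $ Inr a $ Inr b"
  shows "g = h"
proof -
  have "g $ i $ j = h $ i $ j" for i j
    using assms by (cases i; cases j) auto
  then show ?thesis by (simp add: vec_eq_iff)
qed

lemma block_mat_blocks: "block_mat (blkA g) (blkB g) (blkC g) (blkD g) = g"
  by (rule mat2n_eqI) (simp_all add: blkA_def blkB_def blkC_def blkD_def)

lemma blk_block_mat [simp]:
  "blkA (block_mat P Q R S) = P" "blkB (block_mat P Q R S) = Q"
  "blkC (block_mat P Q R S) = R" "blkD (block_mat P Q R S) = S"
  by (simp_all add: vec_eq_iff blkA_def blkB_def blkC_def blkD_def)

lemma block_mat_eq_iff [simp]:
  "block_mat P Q R S = block_mat P' Q' R' S' \<longleftrightarrow> P = P' \<and> Q = Q' \<and> R = R' \<and> S = S'"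
  by (metis blk_block_mat)

lemma sum_UNIV_Plus:
  "(\<Sum>k\<in>UNIV. f k) = (\<Sum>k\<in>UNIV. f (Inl k)) + (\<Sum>k\<in>UNIV. f (Inr k))"
  for f :: "'a::finite + 'b::finite \<Rightarrow> 'c::comm_monoid_add"
  by (subst UNIV_Plus_UNIV[symmetric], subst sum.Plus) simp_all

lemma block_mat_mult:
  "block_mat P Q R S ** block_mat P' Q' R' S' =
    block_mat (P ** P' + Q ** R') (P ** Q' + Q ** S') (R ** P' + S ** R') (R ** Q' + S ** S')"
  by (rule mat2n_eqI) (simp_all add: matrix_matrix_mult_def sum_UNIV_Plus)

lemma transpose_block_mat:
  "transpose (block_mat P Q R S) = block_mat (transpose P) (transpose R) (transpose Q) (transpose S)"
  by (rule mat2n_eqI) (simp_all add: transpose_def)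

lemma uminus_block_mat: "- block_mat P Q R S = block_mat (- P) (- Q) (- R) (- S)"
  by (rule mat2n_eqI) simp_all

lemma tau_block_mat: "tau (block_mat P Q R S) = block_mat P (- Q) (- R) S"
  by (rule mat2n_eqI) (simp_all add: tau_def)

lemma Jmat_block_mat: "Jmat = block_mat 0 (mat 1) (- mat 1) 0"
  by (rule mat2n_eqI) (simp_all add: Jmat_def mat_def)

lemma mat_1_block_mat: "mat 1 = block_mat (mat 1) 0 0 (mat 1)"
  by (rule mat2n_eqI) (simp_all add: mat_def)

lemma matrix_add_rdistrib: "(A + B) ** C = A ** C + B ** C"
  for A :: "'a::semiring_1^'n^'m"
  by (simp add: vec_eq_iff matrix_matrix_mult_def sum.distrib distrib_right)

lemma matrix_diff_ldistrib: "A ** (B - C) = A ** B - A ** C"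
  for A :: "'a::ring_1^'n^'m"
  by (simp add: vec_eq_iff matrix_matrix_mult_def sum_subtractf right_diff_distrib)

lemma matrix_diff_rdistrib: "(A - B) ** C = A ** C - B ** C"
  for A :: "'a::ring_1^'n^'m"
  by (simp add: vec_eq_iff matrix_matrix_mult_def sum_subtractf left_diff_distrib)

lemma matrix_mul_minus_right: "A ** (- B) = - (A ** B)"
  for A :: "'a::ring_1^'n^'m"
  by (simp add: vec_eq_iff matrix_matrix_mult_def sum_negf)

lemma matrix_mul_minus_left: "(- A) ** B = - (A ** B)"
  for A :: "'a::ring_1^'n^'m"
  by (simp add: vec_eq_iff matrix_matrix_mult_def sum_negf)

lemma transpose_add: "transpose (A + B) = transpose A + transpose B"
  by (simp add: vec_eq_iff transpose_def)

lemma transpose_diff: "transpose (A - B) = transpose A - transpose B"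
  by (simp add: vec_eq_iff transpose_def)

lemma transpose_uminus: "transpose (- A) = - transpose A"
  by (simp add: vec_eq_iff transpose_def)

lemma transpose_zero [simp]: "transpose 0 = 0"
  by (simp add: vec_eq_iff transpose_def)

lemma matrix_vector_mult_uminus_left: "(- A) *v x = - (A *v x)"
  for A :: "'a::ring_1^'n^'m"
  by (simp add: vec_eq_iff matrix_vector_mult_def sum_negf)

lemmas matrix_ring_simps = matrix_add_ldistrib matrix_add_rdistrib matrix_diff_ldistrib
  matrix_diff_rdistrib matrix_mul_minus_left matrix_mul_minus_right

lemma matrix_inv_right: "invertible A \<Longrightarrow> A ** matrix_inv A = mat 1"
  unfolding invertible_def matrix_inv_def by (rule someI_ex[THEN conjunct1])

lemma invertible_mat_1_plus_skew:
  fixes K :: "real^'n::finite^'n"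
  assumes skew: "transpose K = - K"
  shows "invertible (mat 1 + K)"
proof -
  have "x = 0" if "(mat 1 + K) *v x = 0" for x
  proof -
    have "x \<bullet> (K *v x) = (transpose K *v x) \<bullet> x"
      by (metis dot_lmul_matrix transpose_matrix_vector)
    also have "\<dots> = - (x \<bullet> (K *v x))"
      by (simp add: skew inner_commute matrix_vector_mult_uminus_left)
    finally have "x \<bullet> (K *v x) = 0" by simp
    then have "x \<bullet> x = x \<bullet> ((mat 1 + K) *v x)"
      by (simp add: matrix_vector_mult_add_rdistrib inner_add_right)
    then show "x = 0" using that by simp
  qed
  then show ?thesis
    by (simp add: invertible_left_inverse matrix_left_invertible_ker)
qed

lemma Sp_block_mat_iff:
  "block_mat P Q R S \<in> Sp \<longleftrightarrow>
    transpose P ** R = transpose R ** P \<and> transpose Q ** S = transpose S ** Q \<and>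
    transpose P ** S - transpose R ** Q = mat 1"
proof -
  have "block_mat P Q R S \<in> Sp \<longleftrightarrow>
      transpose P ** R - transpose R ** P = 0 \<and> transpose P ** S - transpose R ** Q = mat 1 \<and>
      transpose Q ** R - transpose S ** P = - mat 1 \<and> transpose Q ** S - transpose S ** Q = 0"
    by (simp add: Sp_def transpose_block_mat Jmat_block_mat block_mat_mult matrix_ring_simps
        algebra_simps)
  moreover have "transpose Q ** R - transpose S ** P = - mat 1 \<longleftrightarrow>
      transpose P ** S - transpose R ** Q = mat 1"
    by (metis (no_types, lifting) matrix_transpose_mul transpose_diff transpose_mat
        transpose_transpose transpose_uminus minus_diff_eq minus_equation_iff)
  ultimately show ?thesis by auto
qed

lemma Jmat_mult_Jmat: "Jmat ** Jmat = - mat 1"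
  by (simp add: Jmat_block_mat block_mat_mult mat_1_block_mat uminus_block_mat
      matrix_mul_minus_left matrix_mul_minus_right)

lemma Sp_invertible:
  assumes "g \<in> Sp"
  shows "invertible g"
proof -
  have "(- (Jmat ** transpose g ** Jmat)) ** g = - (Jmat ** (transpose g ** Jmat ** g))"
    by (simp add: matrix_mul_minus_left matrix_mul_assoc)
  also have "\<dots> = mat 1"
    using assms by (simp add: Sp_def Jmat_mult_Jmat)
  finally show ?thesis
    by (auto simp: invertible_left_inverse)
qed

lemma Sp_mult:
  assumes "g \<in> Sp" and "h \<in> Sp"
  shows "g ** h \<in> Sp"
proof -
  have "transpose (g ** h) ** Jmat ** (g ** h) = transpose h ** (transpose g ** Jmat ** g) ** h"
    by (simp add: matrix_transpose_mul matrix_mul_assoc)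
  then show ?thesis
    using assms by (simp add: Sp_def)
qed

lemma tau_mult: "tau (g ** h) = tau g ** tau h"
  by (subst (1 2 3 4) block_mat_blocks[symmetric])
    (simp add: block_mat_mult tau_block_mat matrix_mul_minus_left matrix_mul_minus_right)

definition is_coboundary :: "'n::finite mat2n \<Rightarrow> bool" where
  "is_coboundary \<gamma> \<longleftrightarrow> (\<exists>h \<in> Sp. tau h = \<gamma> ** h)"

lemma is_coboundary_conj:
  assumes "u \<in> Sp" and "tau u ** \<gamma>' = \<gamma> ** u" and "is_coboundary \<gamma>'"
  shows "is_coboundary \<gamma>"
proof -
  obtain h where "h \<in> Sp" and h: "tau h = \<gamma>' ** h"
    using assms(3) by (auto simp: is_coboundary_def)
  have "tau (u ** h) = \<gamma> ** (u ** h)"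
    by (simp add: tau_mult h assms(2) matrix_mul_assoc)
  then show ?thesis
    using Sp_mult[OF assms(1) \<open>h \<in> Sp\<close>] by (auto simp: is_coboundary_def)
qed

lemma is_coboundary_imp_eq_tau_mult_inv:
  assumes "is_coboundary \<gamma>"
  shows "\<exists>h \<in> Sp. \<gamma> = tau h ** matrix_inv h"
proof -
  obtain h where "h \<in> Sp" and h: "tau h = \<gamma> ** h"
    using assms by (auto simp: is_coboundary_def)
  have "\<gamma> = \<gamma> ** (h ** matrix_inv h)"
    using matrix_inv_right[OF Sp_invertible[OF \<open>h \<in> Sp\<close>]] by simp
  also have "\<dots> = tau h ** matrix_inv h"
    by (simp add: h matrix_mul_assoc)
  finally show ?thesis
    using \<open>h \<in> Sp\<close> by blast
qed

lemma involution_projections: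
  fixes A :: "real^'n::finite^'n"
  assumes "A ** A = mat 1"
  defines "E \<equiv> (1/2) *\<^sub>R (mat 1 + A)" and "F \<equiv> (1/2) *\<^sub>R (mat 1 - A)"
  shows "A ** E = E" "E ** A = E" "A ** F = - F" "F ** A = - F"
    and "E ** E = E" "F ** F = F" "E ** F = 0" "F ** E = 0"
proof -
  show AE: "A ** E = E" and EA: "E ** A = E" and AF: "A ** F = - F" and FA: "F ** A = - F"
    unfolding E_def F_def
    by (simp_all add: matrix_scalar_ac scalar_matrix_assoc[symmetric] matrix_ring_simps assms
        algebra_simps)
  have E_mult: "E ** M = (1/2) *\<^sub>R (M + A ** M)" and F_mult: "F ** M = (1/2) *\<^sub>R (M - A ** M)"
    for M :: "real^'n^'n"
    unfolding E_def F_def by (simp_all add: scalar_matrix_assoc[symmetric] matrix_ring_simps)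
  show "E ** E = E" "F ** F = F" "E ** F = 0" "F ** E = 0"
    by (simp_all add: E_mult F_mult AE AF flip: scaleR_2)
qed

lemma is_coboundary_block_diag_involution:
  fixes A :: "real^'n::finite^'n"
  assumes "A ** A = mat 1"
  shows "is_coboundary (block_mat A 0 0 (transpose A))"
proof -
  define E F where "E = (1/2) *\<^sub>R (mat 1 + A)" and "F = (1/2) *\<^sub>R (mat 1 - A)"
  note proj = involution_projections[OF assms, folded E_def F_def]
  have proj_transpose: "transpose A ** transpose E = transpose E"
    "transpose A ** transpose F = - transpose F" "transpose E ** transpose E = transpose E"
    "transpose E ** transpose F = 0" "transpose F ** transpose E = 0"
    by (simp_all flip: matrix_transpose_mul add: proj transpose_uminus)
  have "transpose E + F = mat 1 + (1/2) *\<^sub>R (transpose A - A)"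
  proof -
    have "(1/2) *\<^sub>R M + (1/2) *\<^sub>R M = M" for M :: "real^'n^'n"
      by (simp flip: scaleR_add_left)
    then show ?thesis
      unfolding E_def F_def
      by (simp add: transpose_scalar transpose_add scaleR_add_right scaleR_diff_right)
  qed
  moreover have "transpose ((1/2) *\<^sub>R (transpose A - A)) = - ((1/2) *\<^sub>R (transpose A - A))"
    by (simp add: transpose_scalar transpose_diff flip: scaleR_minus_right)
  ultimately have "invertible (transpose E + F)"
    using invertible_mat_1_plus_skew by metis
  then obtain N where N: "transpose E ** N + F ** N = mat 1"
    by (auto simp: invertible_right_inverse matrix_add_rdistrib)
  define h where "h = block_mat E (- (F ** N)) (transpose F) (transpose E ** N)"
  have "tau h = block_mat A 0 0 (transpose A) ** h"
    by (simp add: h_def tau_block_mat block_mat_mult matrix_mul_assoc proj proj_transpose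
        matrix_mul_minus_left matrix_mul_minus_right)
  moreover have "h \<in> Sp"
  proof -
    have "M ** transpose F ** transpose E = 0" "M ** E ** F = 0" for M :: "real^'n^'n"
      by (simp_all flip: matrix_mul_assoc add: proj proj_transpose)
    then show ?thesis
      by (simp add: h_def Sp_block_mat_iff matrix_transpose_mul transpose_uminus matrix_mul_assoc
        proj proj_transpose matrix_ring_simps N)
  qed
  ultimately show ?thesis
    unfolding is_coboundary_def by blast
qed

lemma is_coboundary_upper_block:
  fixes A B :: "real^'n::finite^'n"
  assumes AA: "A ** A = mat 1" and AB: "A ** B = B ** transpose A"
    and AB_sym: "transpose (A ** B) = A ** B"
  shows "is_coboundary (block_mat A B 0 (transpose A))"
proof (rule is_coboundary_conj)
  define X where "X = - (1/2) *\<^sub>R (A ** B)"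
  show "block_mat (mat 1) X 0 (mat 1) \<in> Sp"
    using AB_sym by (simp add: Sp_block_mat_iff X_def transpose_uminus transpose_scalar)
  have "A ** B ** transpose A = B"
    by (metis AA AB matrix_mul_assoc matrix_mul_lid)
  then show "tau (block_mat (mat 1) X 0 (mat 1)) ** block_mat A 0 0 (transpose A) =
      block_mat A B 0 (transpose A) ** block_mat (mat 1) X 0 (mat 1)"
    by (simp add: tau_block_mat block_mat_mult X_def matrix_scalar_ac matrix_mul_assoc AA
        matrix_mul_minus_left matrix_mul_minus_right flip: scalar_matrix_assoc)
  show "is_coboundary (block_mat A 0 0 (transpose A))"
    using AA by (rule is_coboundary_block_diag_involution)
qed

lemma upper_triangular_cocycle_blocks:
  fixes A B D :: "real^'n::finite^'n"
  assumes Sp: "block_mat A B 0 D \<in> Sp"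
    and cocycle: "block_mat A B 0 D ** tau (block_mat A B 0 D) = mat 1"
  shows "A ** A = mat 1" and "D = transpose A" and "A ** B = B ** transpose A"
    and "transpose (A ** B) = A ** B"
proof -
  have AD: "transpose A ** D = mat 1" and BD: "transpose B ** D = transpose D ** B"
    using Sp by (simp_all add: Sp_block_mat_iff)
  have AA: "A ** A = mat 1" and AB: "A ** B = B ** D"
    using cocycle by (simp_all add: tau_block_mat block_mat_mult mat_1_block_mat
        matrix_mul_minus_right)
  show "A ** A = mat 1" by (fact AA)
  have "transpose A ** transpose A = mat 1"
    by (metis AA matrix_transpose_mul transpose_mat)
  then show D: "D = transpose A"
    by (metis AD matrix_mul_assoc matrix_mul_lid matrix_mul_rid)
  with AB show "A ** B = B ** transpose A" by simp
  show "transpose (A ** B) = A ** B"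
    using BD by (simp add: matrix_transpose_mul D)
qed

theorem lemma3p10:
  fixes \<gamma> :: "'n::finite mat2n"
  assumes "\<gamma> \<in> Sp"
    and "\<gamma> ** tau \<gamma> = mat 1"
    and "blkC \<gamma> = 0"
  shows "\<exists>h \<in> Sp. \<gamma> = tau h ** matrix_inv h"
proof -
  define A B D where "A = blkA \<gamma>" and "B = blkB \<gamma>" and "D = blkD \<gamma>"
  have \<gamma>: "\<gamma> = block_mat A B 0 D"
    using block_mat_blocks[of \<gamma>] assms(3) by (simp add: A_def B_def D_def)
  note blocks = upper_triangular_cocycle_blocks[OF assms(1,2)[unfolded \<gamma>]]
  have "is_coboundary (block_mat A B 0 (transpose A))"
    using blocks by (intro is_coboundary_upper_block)
  then show ?thesis
    unfolding \<gamma> blocks(2) by (rule is_coboundary_imp_eq_tau_mult_inv)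
qed

end
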